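(* Let $k\geq 2$ be an integer and let $G_k(x,t)=\sum_{n\geq 0}\sum_{w\in[k]^n} t^{\mathrm{cs}(w)}x^n$. Put $\phi=\dfrac{1-x(t-1)}{2x(t-1)}$ and \[\gamma(x,t)=\frac{k}{1-3x(t-1)}-\frac{2x(t-1)}{(1-3x(t-1))^{2}}\cdot\frac{U_{k}(\phi)-U_{k-1}(\phi)-1}{U_{k}(\phi)}.\] Then \begin{align*} G_k(x,t)=1+\frac{1+3x(t-1)}{(1-3x(t-1))(1+x(t-1))}\Bigg[&\frac{1}{1-x\gamma(x,t)}\\ &-\frac{2x(t-1)(k+1)}{(1+3x(t-1))U_{k}(\phi)}\left(\frac{1-x\,\frac{1+k-U_{k}(\phi)}{1-3x(t-1)}}{1-x\gamma(x,t)}+U_{k-1}(\phi)-1\right)+kx(t-1)-1\Bigg]. \end{align*}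
   Context: For an integer $k\geq 2$, $[k]=\{1,2,\ldots,k\}$ and a word over $k$ of length $n$ is an element $w=w_1\cdots w_n\in[k]^n$ ($[k]^0$ consists of the empty word). For such $w$, $\mathrm{cs}(w)$ is the number of indices $0\leq i\leq n-1$ with $|w_{i+1}-w_i|\leq 1$, where $w_0$ means $w_n$ (so $\mathrm{cs}$ of the empty word is $0$ and $\mathrm{cs}(w)=1$ for a word of length $1$). $U_n$ denotes the Chebyshev polynomial of the second kind: $U_0(x)=1$, $U_1(x)=2x$, $U_{n+1}(x)=2xU_n(x)-U_{n-1}(x)$. The identity is an identity of rational functions in $x,t$ (equivalently of formal power series in $x$ with coefficients polynomial in $t$). *)

theory Defs
  imports "HOL-Computational_Algebra.Polynomial" "HOL-Computational_Algebra.Fraction_Field"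
          "HOL-Computational_Algebra.Formal_Laurent_Series"
begin

fun chebU :: "nat \<Rightarrow> 'a::comm_ring_1 \<Rightarrow> 'a" where
  "chebU 0 z = 1"
| "chebU (Suc 0) z = 2 * z"
| "chebU (Suc (Suc n)) z = 2 * z * chebU (Suc n) z - chebU n z"

text \<open>Words of length n over [k] = {1..k}, represented as lists (w_1 ... w_n = w!0 ... w!(n-1)).\<close>
definition words :: "nat \<Rightarrow> nat \<Rightarrow> nat list set" where
  "words k n = {w. length w = n \<and> set w \<subseteq> {1..k}}"

definition cs :: "nat list \<Rightarrow> nat" where
  "cs w = card {i. i < length w \<and>
      \<bar>int (w ! ((i + 1) mod length w)) - int (w ! i)\<bar> \<le> 1}"

definition tvar :: "real poly fract" where
  "tvar = Fraction_Field.Fract [:0, 1:] 1"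

definition Gk :: "nat \<Rightarrow> real poly fract fps" where
  "Gk k = Abs_fps (\<lambda>n. \<Sum>w\<in>words k n. tvar ^ cs w)"

end

theory Submission
  imports Defs
begin

(* Read cyclically, a word w over [k] is a closed walk, and t^cs(w) is its weight for the
   transfer matrix W = J + (t - 1) A, where J is the all-ones matrix and A the 0/1 matrix of
   |i - j| <= 1 on [k].  Hence G_k = 1 - k + tr (I - x W)^-1.  With a = x (t - 1) we have
   I - x W = (I - a A) - x J, and I - a A = a (2 phi I - P) with P the adjacency matrix of the
   path 1 - 2 - ... - k, whose inverse is the Green's function of the path, a product of two
   Chebyshev values at phi.  The rank-one term x J is removed by the Sherman-Morrison formula,
   so the trace reduces to sums of U_i(phi), of their squares and of a convolution, each of
   which has a closed form; what remains is an identity of rational functions.  Everything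
   takes place in Laurent series in x over R(t), where the linear system for (I - x W)^-1 has
   a unique solution. *)

unbundle fps_syntax

section \<open>Chebyshev polynomials as a Lucas sequence\<close>

(* Shifted by one against chebU so that lucasU z 0 = 0 can serve as the boundary condition
   of path_green. *)
fun lucasU :: "'a::comm_ring_1 \<Rightarrow> nat \<Rightarrow> 'a" where
  "lucasU z 0 = 0"
| "lucasU z (Suc 0) = 1"
| "lucasU z (Suc (Suc n)) = 2 * z * lucasU z (Suc n) - lucasU z n"

lemma chebU_eq_lucasU: "chebU n z = lucasU z (Suc n)"
  by (induction n z rule: chebU.induct) auto

lemma lucasU_Suc: "n \<ge> 1 \<Longrightarrow> lucasU z (n + 1) = 2 * z * lucasU z n - lucasU z (n - 1)"
  by (cases n) (auto simp: numeral_2_eq_2)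

lemma lucasU_add:
  "lucasU z (p + 1) * lucasU z (q + 1) - lucasU z p * lucasU z q = lucasU z (p + q + 1)"
proof (induction p arbitrary: q)
  case 0
  then show ?case by simp
next
  case (Suc p)
  have "lucasU z (Suc p + 1) * lucasU z (q + 1) - lucasU z (Suc p) * lucasU z q
      = lucasU z (p + 1) * lucasU z (Suc q + 1) - lucasU z p * lucasU z (Suc q)"
    by (simp add: algebra_simps)
  also have "\<dots> = lucasU z (p + Suc q + 1)" by (rule Suc.IH)
  finally show ?case by simp
qed

lemma lucasU_cassini: "lucasU z (n + 1) ^ 2 - lucasU z (n + 2) * lucasU z n = 1"
  by (induction n) (simp_all add: algebra_simps power2_eq_square)

lemma lucasU_sum:
  "2 * (z - 1) * (\<Sum>n=1..m. lucasU z n) = lucasU z (m + 1) - lucasU z m - 1"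
  by (induction m) (simp_all add: algebra_simps)

lemma lucasU_sum_squares:
  "2 * (1 - z\<^sup>2) * (\<Sum>n=1..m. lucasU z n ^ 2)
     = of_nat m + 1 - lucasU z (m + 1) ^ 2 + z * lucasU z (m + 1) * lucasU z m"
proof (induction m)
  case 0
  then show ?case by simp
next
  case (Suc m)
  have step: "2 * (1 - z\<^sup>2) * lucasU z (m + 1) ^ 2
      = (of_nat (m + 1) + 1 - lucasU z (m + 2) ^ 2 + z * lucasU z (m + 2) * lucasU z (m + 1))
        - (of_nat m + 1 - lucasU z (m + 1) ^ 2 + z * lucasU z (m + 1) * lucasU z m)
        + (lucasU z (m + 1) ^ 2 - lucasU z (m + 2) * lucasU z m - 1)"
    by (simp add: numeral_2_eq_2 algebra_simps power2_eq_square)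
  have "2 * (1 - z\<^sup>2) * (\<Sum>n=1..m+1. lucasU z n ^ 2)
      = 2 * (1 - z\<^sup>2) * (\<Sum>n=1..m. lucasU z n ^ 2) + 2 * (1 - z\<^sup>2) * lucasU z (m + 1) ^ 2"
    by (simp add: algebra_simps)
  also have "\<dots> = of_nat (m + 1) + 1 - lucasU z (m + 2) ^ 2 + z * lucasU z (m + 2) * lucasU z (m + 1)"
    unfolding Suc.IH step lucasU_cassini by simp
  finally show ?case by (simp add: numeral_2_eq_2)
qed

definition lucasU_conv :: "'a::comm_ring_1 \<Rightarrow> nat \<Rightarrow> 'a" where
  "lucasU_conv z m = (\<Sum>i=1..m. lucasU z i * lucasU z (m + 1 - i))"

lemma lucasU_conv_rec:
  "lucasU_conv z (m + 2) = 2 * z * lucasU_conv z (m + 1) - lucasU_conv z m + lucasU z (m + 2)"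
proof -
  have "lucasU_conv z (m + 2) = (\<Sum>i=1..m+1. lucasU z i * lucasU z (m + 3 - i)) + lucasU z (m + 2)"
    unfolding lucasU_conv_def by (simp add: numeral_3_eq_3)
  also have "(\<Sum>i=1..m+1. lucasU z i * lucasU z (m + 3 - i))
      = (\<Sum>i=1..m+1. 2 * z * (lucasU z i * lucasU z (m + 2 - i)) - lucasU z i * lucasU z (m + 1 - i))"
  proof (rule sum.cong)
    fix i assume "i \<in> {1..m+1}"
    then have "m + 3 - i = Suc (Suc (m + 1 - i))" "m + 2 - i = Suc (m + 1 - i)" by auto
    then show "lucasU z i * lucasU z (m + 3 - i)
        = 2 * z * (lucasU z i * lucasU z (m + 2 - i)) - lucasU z i * lucasU z (m + 1 - i)"
      by (simp add: algebra_simps)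
  qed simp
  also have "\<dots> = 2 * z * lucasU_conv z (m + 1) - lucasU_conv z m"
    unfolding lucasU_conv_def sum_subtractf sum_distrib_left by (simp add: numeral_2_eq_2)
  finally show ?thesis .
qed

lemma lucasU_conv_closed:
  "2 * (z\<^sup>2 - 1) * lucasU_conv z m = of_nat m * z * lucasU z (m + 1) - (of_nat m + 1) * lucasU z m"
proof (induction z m rule: lucasU.induct)
  case (3 z n)
  have "2 * (z\<^sup>2 - 1) * lucasU_conv z (n + 2)
      = 2 * z * (2 * (z\<^sup>2 - 1) * lucasU_conv z (Suc n)) - 2 * (z\<^sup>2 - 1) * lucasU_conv z n
        + 2 * (z\<^sup>2 - 1) * lucasU z (n + 2)"
    by (subst lucasU_conv_rec) (simp add: algebra_simps)
  also have "\<dots> = of_nat (n + 2) * z * lucasU z (n + 3) - (of_nat (n + 2) + 1) * lucasU z (n + 2)"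
    unfolding "3.IH" by (simp add: numeral_2_eq_2 numeral_3_eq_3 algebra_simps power2_eq_square)
  finally show ?case
    by (simp add: numeral_2_eq_2 numeral_3_eq_3)
qed (simp_all add: lucasU_conv_def algebra_simps power2_eq_square)

section \<open>Inverting the tridiagonal part\<close>

definition path_green :: "'a::field \<Rightarrow> nat \<Rightarrow> nat \<Rightarrow> nat \<Rightarrow> 'a" where
  "path_green z k i j = lucasU z (min i j) * lucasU z (k + 1 - max i j) / lucasU z (k + 1)"

lemma path_green_sym: "path_green z k i j = path_green z k j i"
  unfolding path_green_def by (simp add: min.commute max.commute)

(* As path_green z k 0 j = path_green z k (k + 1) j = 0, this says that path_green z k inverts
   the k x k matrix with 2z on the diagonal and -1 next to it. *)
lemma path_green_inverse:
  assumes i: "i \<in> {1..k}" and j: "j \<in> {1..k}" and u: "lucasU z (k + 1) \<noteq> 0"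
  shows "2 * z * path_green z k i j - path_green z k (i - 1) j - path_green z k (i + 1) j
    = (if i = j then 1 else 0)"
proof -
  let ?V = "lucasU z" and ?G = "path_green z k"
  have diff: "2 * z * ?G i j - ?G (i - 1) j - ?G (i + 1) j
    = (2 * z * (?V (min i j) * ?V (k + 1 - max i j)) - ?V (min (i - 1) j) * ?V (k + 1 - max (i - 1) j)
       - ?V (min (i + 1) j) * ?V (k + 1 - max (i + 1) j)) / ?V (k + 1)"
    unfolding path_green_def by (simp add: diff_divide_distrib)
  have rec_i: "?V (Suc i) = 2 * z * ?V i - ?V (i - 1)"
    using i lucasU_Suc[of i z] by simp
  consider "i < j" | "i = j" | "j < i" by arith
  then show ?thesis
  proof cases
    case 1
    then have "min (i - 1) j = i - 1" "min (i + 1) j = i + 1" "max (i - 1) j = j" "max (i + 1) j = j"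
      by auto
    with 1 show ?thesis
      unfolding diff by (simp add: rec_i algebra_simps)
  next
    case 2
    have "?V (i + 1) * ?V (k - i + 1) - ?V i * ?V (k - i) = ?V (i + (k - i) + 1)"
      by (rule lucasU_add)
    moreover have "i + (k - i) + 1 = k + 1" "k - i + 1 = k + 1 - i" "k + 1 - (i + 1) = k - i"
      using i by auto
    ultimately have "2 * z * (?V i * ?V (k + 1 - i)) - ?V (i - 1) * ?V (k + 1 - i)
        - ?V i * ?V (k + 1 - (i + 1)) = ?V (k + 1)"
      by (simp add: rec_i algebra_simps)
    with 2 u show ?thesis
      unfolding diff by (simp add: min_def max_def)
  next
    case 3
    have rec: "?V (k + 1 - (i - 1)) = 2 * z * ?V (k + 1 - i) - ?V (k + 1 - (i + 1))"
      using i 3 lucasU_Suc[of "k + 1 - i" z] by (simp add: Suc_diff_le)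
    have "2 * z * (?V j * ?V (k + 1 - i)) - ?V j * ?V (k + 1 - (i - 1))
        - ?V j * ?V (k + 1 - (i + 1)) = 0"
      unfolding rec by (simp add: algebra_simps)
    moreover have "min (i - 1) j = j" "min (i + 1) j = j" "max (i - 1) j = i - 1" "max (i + 1) j = i + 1"
      using 3 by auto
    ultimately show ?thesis
      using 3 unfolding diff by simp
  qed
qed

lemma path_green_row_sum:
  assumes i: "i \<in> {1..k}" and u: "lucasU z (k + 1) \<noteq> 0"
  shows "2 * (z - 1) * lucasU z (k + 1) * (\<Sum>j=1..k. path_green z k i j)
    = lucasU z (k + 1) - lucasU z (k + 1 - i) - lucasU z i"
proof -
  let ?V = "lucasU z"
  have "(\<Sum>j=1..k. path_green z k i j) = (\<Sum>j=1..i. path_green z k i j) + (\<Sum>j=i+1..k. path_green z k i j)"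
    using i sum.ub_add_nat[of 1 i "path_green z k i" "k - i"] by simp
  also have "(\<Sum>j=1..i. path_green z k i j) = ?V (k + 1 - i) * (\<Sum>j=1..i. ?V j) / ?V (k + 1)"
    unfolding path_green_def sum_distrib_left sum_divide_distrib
    by (intro sum.cong) (auto simp: min_def max_def mult.commute)
  also have "(\<Sum>j=i+1..k. path_green z k i j) = ?V i * (\<Sum>j=i+1..k. ?V (k + 1 - j)) / ?V (k + 1)"
    unfolding path_green_def sum_distrib_left sum_divide_distrib
    by (intro sum.cong) (auto simp: min_def max_def)
  also have "(\<Sum>j=i+1..k. ?V (k + 1 - j)) = (\<Sum>n=1..k-i. ?V n)"
    by (rule sum.reindex_bij_witness[where i="\<lambda>n. k + 1 - n" and j="\<lambda>j. k + 1 - j"]) auto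
  finally have "2 * (z - 1) * ?V (k + 1) * (\<Sum>j=1..k. path_green z k i j)
      = ?V (k + 1 - i) * (2 * (z - 1) * (\<Sum>j=1..i. ?V j)) + ?V i * (2 * (z - 1) * (\<Sum>n=1..k-i. ?V n))"
    using u by (simp add: field_simps)
  also have "\<dots> = ?V (k + 1 - i) * (?V (i + 1) - ?V i - 1) + ?V i * (?V (k - i + 1) - ?V (k - i) - 1)"
    unfolding lucasU_sum ..
  also have "\<dots> = (?V (i + 1) * ?V (k - i + 1) - ?V i * ?V (k - i)) - ?V (k + 1 - i) - ?V i"
    using i by (simp add: Suc_diff_le algebra_simps)
  also have "\<dots> = ?V (k + 1) - ?V (k + 1 - i) - ?V i"
    using i lucasU_add[of z i "k - i"] by simp
  finally show ?thesis .
qed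

lemma path_green_trace: "(\<Sum>i=1..k. path_green z k i i) = lucasU_conv z k / lucasU z (k + 1)"
  unfolding path_green_def lucasU_conv_def sum_divide_distrib by simp

lemma sum_neighbours:
  assumes i: "i \<in> {1..k}" and "f 0 = 0" and "f (k + 1) = 0"
  shows "(\<Sum>l=1..k. if \<bar>int l - int i\<bar> \<le> 1 then f l else 0) = f (i - 1) + f i + f (i + 1)"
proof -
  have "(\<Sum>l=1..k. if \<bar>int l - int i\<bar> \<le> 1 then f l else 0)
      = (\<Sum>l=0..k+1. if \<bar>int l - int i\<bar> \<le> 1 then f l else 0)"
    using assms by (simp add: sum.atLeast0_atMost_Suc_shift sum.atLeast_Suc_atMost)
  also have "\<dots> = (\<Sum>l\<in>{i - 1, i, i + 1}. f l)"
    using i by (intro sum.mono_neutral_cong_right) auto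
  also have "\<dots> = f (i - 1) + f i + f (i + 1)"
    using i by (cases i) (auto simp: add.assoc)
  finally show ?thesis .
qed

definition tridiag :: "'a::comm_ring_1 \<Rightarrow> nat \<Rightarrow> nat \<Rightarrow> 'a" where
  "tridiag a i l = (if i = l then 1 else 0) - (if \<bar>int l - int i\<bar> \<le> 1 then a else 0)"

lemma tridiag_inverse:
  fixes a z :: "'a::field"
  assumes za: "2 * z * a = 1 - a" and a: "a \<noteq> 0" and u: "lucasU z (k + 1) \<noteq> 0"
    and i: "i \<in> {1..k}" and j: "j \<in> {1..k}"
  shows "(\<Sum>l=1..k. tridiag a i l * (path_green z k l j / a)) = (if i = j then 1 else 0)"
proof -
  let ?G = "\<lambda>l. path_green z k l j"
  have "(\<Sum>l=1..k. tridiag a i l * (?G l / a))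
      = (?G i - a * (\<Sum>l=1..k. if \<bar>int l - int i\<bar> \<le> 1 then ?G l else 0)) / a"
  proof -
    have pointwise: "tridiag a i l * (?G l / a)
        = ((if i = l then ?G l else 0) - a * (if \<bar>int l - int i\<bar> \<le> 1 then ?G l else 0)) / a" for l
      unfolding tridiag_def using a by (simp add: field_simps)
    have "(\<Sum>l=1..k. if i = l then ?G l else 0) = ?G i"
      using i by simp
    then show ?thesis
      unfolding pointwise sum_divide_distrib[symmetric] sum_subtractf sum_distrib_left[symmetric] by simp
  qed
  also have "(\<Sum>l=1..k. if \<bar>int l - int i\<bar> \<le> 1 then ?G l else 0) = ?G (i - 1) + ?G i + ?G (i + 1)"
    using i j by (intro sum_neighbours) (auto simp: path_green_def)
  also have "(?G i - a * (?G (i - 1) + ?G i + ?G (i + 1))) / a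
      = ((1 - a) * ?G i - a * (?G (i - 1) + ?G (i + 1))) / a"
    by (simp add: algebra_simps)
  also have "\<dots> = 2 * z * ?G i - ?G (i - 1) - ?G (i + 1)"
    unfolding za[symmetric] using a by (simp add: field_simps)
  also have "\<dots> = (if i = j then 1 else 0)"
    using i j u by (rule path_green_inverse)
  finally show ?thesis .
qed

lemma inverse_row_sum:
  fixes M B :: "'b \<Rightarrow> 'b \<Rightarrow> 'a::comm_ring_1"
  assumes "finite I" and inv: "\<And>i j. i \<in> I \<Longrightarrow> j \<in> I \<Longrightarrow> (\<Sum>l\<in>I. M i l * B l j) = (if i = j then 1 else 0)"
    and i: "i \<in> I"
  shows "(\<Sum>l\<in>I. M i l * (\<Sum>m\<in>I. B l m)) = 1"
proof -
  have "(\<Sum>l\<in>I. M i l * (\<Sum>m\<in>I. B l m)) = (\<Sum>m\<in>I. \<Sum>l\<in>I. M i l * B l m)"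
    unfolding sum_distrib_left by (rule sum.swap)
  also have "\<dots> = (\<Sum>m\<in>I. if i = m then 1 else 0)"
    using i inv by simp
  finally show ?thesis
    using assms by simp
qed

lemma sherman_morrison_ones:
  fixes I :: "'b set" and M B :: "'b \<Rightarrow> 'b \<Rightarrow> 'a::field" and x :: 'a
  defines "r \<equiv> \<lambda>l. \<Sum>m\<in>I. B l m" and "c \<equiv> \<lambda>j. \<Sum>m\<in>I. B m j" and "s \<equiv> \<Sum>l\<in>I. \<Sum>m\<in>I. B l m"
  assumes "finite I" and inv: "\<And>i j. i \<in> I \<Longrightarrow> j \<in> I \<Longrightarrow> (\<Sum>l\<in>I. M i l * B l j) = (if i = j then 1 else 0)"
    and D: "1 - x * s \<noteq> 0" and i: "i \<in> I" and j: "j \<in> I"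
  shows "(\<Sum>l\<in>I. (M i l - x) * (B l j + x * r l * c j / (1 - x * s))) = (if i = j then 1 else 0)"
proof -
  have row: "(\<Sum>l\<in>I. M i l * r l) = 1"
    unfolding r_def using assms(4) inv i by (rule inverse_row_sum)
  define y where "y = x * c j / (1 - x * s)"
  have "(\<Sum>l\<in>I. (M i l - x) * (B l j + x * r l * c j / (1 - x * s)))
      = (\<Sum>l\<in>I. M i l * B l j - x * B l j + y * (M i l * r l - x * r l))"
    unfolding y_def using D by (intro sum.cong) (simp_all add: field_simps)
  also have "\<dots> = (\<Sum>l\<in>I. M i l * B l j) - x * (\<Sum>l\<in>I. B l j)
      + y * ((\<Sum>l\<in>I. M i l * r l) - x * (\<Sum>l\<in>I. r l))"
    by (simp add: sum.distrib sum_subtractf sum_distrib_left right_diff_distrib)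
  also have "\<dots> = (if i = j then 1 else 0) - x * c j + y * (1 - x * s)"
    using row inv[OF i j] unfolding c_def s_def r_def by simp
  also have "\<dots> = (if i = j then 1 else 0)"
    unfolding y_def using D by simp
  finally show ?thesis .
qed

section \<open>Cyclic words as closed walks\<close>

definition adj_weight :: "'a::comm_semiring_1 \<Rightarrow> nat \<Rightarrow> nat \<Rightarrow> 'a" where
  "adj_weight t i j = (if \<bar>int j - int i\<bar> \<le> 1 then t else 1)"

fun walk_weight :: "'a::comm_semiring_1 \<Rightarrow> nat \<Rightarrow> nat list \<Rightarrow> 'a" where
  "walk_weight t i [] = 1"
| "walk_weight t i (j # w) = adj_weight t i j * walk_weight t j w"

definition walk_sum :: "'a::comm_semiring_1 \<Rightarrow> nat \<Rightarrow> nat \<Rightarrow> nat \<Rightarrow> nat \<Rightarrow> 'a" where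
  "walk_sum t k n i j = (\<Sum>w\<in>words k n. if last (i # w) = j then walk_weight t i w else 0)"

lemma words_0: "words k 0 = {[]}"
  unfolding words_def by auto

lemma words_Suc: "words k (Suc n) = (\<lambda>(l, w). l # w) ` ({1..k} \<times> words k n)"
proof
  show "words k (Suc n) \<subseteq> (\<lambda>(l, w). l # w) ` ({1..k} \<times> words k n)"
  proof
    fix v assume "v \<in> words k (Suc n)"
    then obtain l w where "v = l # w" "length w = n" "set v \<subseteq> {1..k}"
      unfolding words_def by (cases v) auto
    then show "v \<in> (\<lambda>(l, w). l # w) ` ({1..k} \<times> words k n)"
      unfolding words_def by (auto intro!: image_eqI[of _ _ "(l, w)"])
  qed
qed (auto simp: words_def)

lemma walk_sum_0: "walk_sum t k 0 i j = (if i = j then 1 else 0)"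
  unfolding walk_sum_def words_0 by simp

lemma walk_sum_Suc: "walk_sum t k (Suc n) i j = (\<Sum>l=1..k. adj_weight t i l * walk_sum t k n l j)"
proof -
  have inj: "inj_on (\<lambda>(l, w). l # w) ({1..k} \<times> words k n)"
    by (auto simp: inj_on_def)
  have "walk_sum t k (Suc n) i j
      = (\<Sum>(l, w)\<in>{1..k} \<times> words k n. if last (i # l # w) = j then walk_weight t i (l # w) else 0)"
    unfolding walk_sum_def words_Suc by (subst sum.reindex[OF inj]) (simp add: case_prod_unfold)
  also have "\<dots> = (\<Sum>l=1..k. \<Sum>w\<in>words k n. if last (i # l # w) = j then walk_weight t i (l # w) else 0)"
    by (simp add: sum.cartesian_product)
  also have "\<dots> = (\<Sum>l=1..k. \<Sum>w\<in>words k n. adj_weight t i l * (if last (l # w) = j then walk_weight t l w else 0))"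
    by (intro sum.cong refl) simp
  also have "\<dots> = (\<Sum>l=1..k. adj_weight t i l * walk_sum t k n l j)"
    unfolding walk_sum_def by (simp add: sum_distrib_left)
  finally show ?thesis .
qed

lemma walk_weight_eq_prod: "walk_weight t i w = (\<Prod>m<length w. adj_weight t ((i # w) ! m) (w ! m))"
  by (induction w arbitrary: i) (simp_all add: prod.lessThan_Suc_shift del: prod.lessThan_Suc)

lemma power_cs_eq_walk_weight:
  assumes "w \<noteq> []"
  shows "t ^ cs w = walk_weight t (last w) w"
proof -
  obtain m where n: "length w = Suc m"
    using assms by (cases w) auto
  let ?P = "\<lambda>i. \<bar>int (w ! ((i + 1) mod length w)) - int (w ! i)\<bar> \<le> 1"
  have "t ^ cs w = t ^ card ({..<length w} \<inter> {i. ?P i})"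
    unfolding cs_def by (simp add: lessThan_def Collect_conj_eq)
  also have "\<dots> = (\<Prod>i<length w. adj_weight t (w ! i) (w ! ((i + 1) mod length w)))"
    unfolding adj_weight_def by (simp add: prod.If_cases)
  also have "\<dots> = (\<Prod>i<m. adj_weight t (w ! i) (w ! Suc i)) * adj_weight t (w ! m) (w ! 0)"
    unfolding n by simp
  also have "\<dots> = walk_weight t (last w) w"
    unfolding walk_weight_eq_prod n using n assms
    by (simp add: last_conv_nth prod.lessThan_Suc_shift mult.commute del: prod.lessThan_Suc)
  finally show ?thesis .
qed

lemma sum_power_cs_eq_walk_trace:
  assumes "n \<ge> 1"
  shows "(\<Sum>w\<in>words k n. t ^ cs w) = (\<Sum>i=1..k. walk_sum t k n i i)"
proof -
  have nonempty: "w \<noteq> []" if "w \<in> words k n" for w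
    using that assms unfolding words_def by auto
  have last_in: "last w \<in> {1..k}" if "w \<in> words k n" for w
    using that last_in_set[OF nonempty[OF that]] unfolding words_def by auto
  have "(\<Sum>i=1..k. walk_sum t k n i i)
      = (\<Sum>w\<in>words k n. \<Sum>i=1..k. if last w = i then walk_weight t i w else 0)"
    unfolding walk_sum_def using nonempty by (subst sum.swap) (intro sum.cong; simp)
  also have "\<dots> = (\<Sum>w\<in>words k n. walk_weight t (last w) w)"
    using last_in by (intro sum.cong) auto
  also have "\<dots> = (\<Sum>w\<in>words k n. t ^ cs w)"
    using nonempty by (intro sum.cong) (simp_all add: power_cs_eq_walk_weight)
  finally show ?thesis by simp
qed

section \<open>Generating functions of walks\<close>

lemma fps_to_fls_sum: "fps_to_fls (\<Sum>x\<in>A. f x) = (\<Sum>x\<in>A. fps_to_fls (f x))"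
  by (induction A rule: infinite_finite_induct) simp_all

lemma fls_const_diff: "fls_const (c - d) = fls_const c - fls_const d"
  by (rule fls_eqI) simp

lemma fls_X_linear_system_trivial:
  fixes y :: "'b \<Rightarrow> 'a::field fls"
  assumes "finite I" and sol: "\<And>i. i \<in> I \<Longrightarrow> y i = fls_X * (\<Sum>l\<in>I. fls_const (c i l) * y l)"
    and i: "i \<in> I"
  shows "y i = 0"
proof (rule ccontr)
  assume "y i \<noteq> 0"
  define J where "J = {l \<in> I. y l \<noteq> 0}"
  define N where "N = Min ((\<lambda>l. fls_subdegree (y l)) ` J)"
  have J: "finite J" "i \<in> J"
    using assms \<open>y i \<noteq> 0\<close> unfolding J_def by auto
  then have "N \<in> (\<lambda>l. fls_subdegree (y l)) ` J"
    unfolding N_def by (intro Min_in) auto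
  then obtain m where m: "m \<in> J" "fls_subdegree (y m) = N"
    by auto
  have below: "y l $$ (N - 1) = 0" if "l \<in> I" for l
  proof (cases "l \<in> J")
    case True
    then have "N \<le> fls_subdegree (y l)"
      unfolding N_def using J by simp
    then show ?thesis by simp
  next
    case False
    with that show ?thesis unfolding J_def by simp
  qed
  have "y m $$ N = (\<Sum>l\<in>I. c m l * y l $$ (N - 1))"
    using m(1) unfolding J_def by (subst sol) (auto simp: fls_X_times_conv_shift fls_nth_sum)
  also have "\<dots> = 0"
    using below by simp
  finally have "y m $$ N = 0" .
  moreover have "y m $$ N \<noteq> 0"
    using m nth_fls_subdegree_nonzero[of "y m"] unfolding J_def by auto
  ultimately show False
    by contradiction
qed

definition walk_gf :: "'a::field \<Rightarrow> nat \<Rightarrow> nat \<Rightarrow> nat \<Rightarrow> 'a fls" where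
  "walk_gf t k i j = fps_to_fls (Abs_fps (\<lambda>n. walk_sum t k n i j))"

lemma walk_gf_eq:
  "walk_gf t k i j = (if i = j then 1 else 0) + fls_X * (\<Sum>l=1..k. fls_const (adj_weight t i l) * walk_gf t k l j)"
proof -
  have "Abs_fps (\<lambda>n. walk_sum t k n i j) = (if i = j then 1 else 0)
      + fps_X * (\<Sum>l=1..k. fps_const (adj_weight t i l) * Abs_fps (\<lambda>n. walk_sum t k n l j))"
  proof (rule fps_ext)
    fix n
    show "Abs_fps (\<lambda>n. walk_sum t k n i j) $ n = ((if i = j then 1 else 0)
        + fps_X * (\<Sum>l=1..k. fps_const (adj_weight t i l) * Abs_fps (\<lambda>n. walk_sum t k n l j))) $ n"
      by (cases n) (simp_all add: walk_sum_0 walk_sum_Suc fps_sum_nth)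
  qed
  then show ?thesis
    unfolding walk_gf_def by (simp add: fls_times_fps_to_fls fps_to_fls_sum)
qed

lemma Gk_eq_walk_gf_trace: "fps_to_fls (Gk k) = 1 - of_nat k + (\<Sum>i=1..k. walk_gf tvar k i i)"
proof -
  have "Gk k = 1 - of_nat k + (\<Sum>i=1..k. Abs_fps (\<lambda>n. walk_sum tvar k n i i))"
  proof (rule fps_ext)
    fix n
    show "Gk k $ n = (1 - of_nat k + (\<Sum>i=1..k. Abs_fps (\<lambda>n. walk_sum tvar k n i i))) $ n"
    proof (cases n)
      case 0
      then show ?thesis
        by (simp add: Gk_def words_0 cs_def walk_sum_0 fps_sum_nth fps_of_nat)
    next
      case (Suc m)
      then show ?thesis
        by (simp add: Gk_def sum_power_cs_eq_walk_trace fps_sum_nth fps_of_nat)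
    qed
  qed
  then show ?thesis
    by (simp add: fps_to_fls_sum walk_gf_def)
qed

lemma lucasU_fls_nonzero:
  fixes A :: "'a::field fps" and z :: "'a fls"
  assumes A0: "A $ 0 = 0" and za: "2 * z * fps_to_fls A = 1 - fps_to_fls A"
  shows "lucasU z (n + 1) \<noteq> 0"
proof -
  let ?a = "fps_to_fls A"
  have "\<exists>P Q. P $ 0 = 1 \<and> fps_to_fls P = ?a ^ n * lucasU z (n + 1)
      \<and> Q $ 0 = 1 \<and> fps_to_fls Q = ?a ^ (n + 1) * lucasU z (n + 2)"
  proof (induction n)
    case 0
    have "?a * lucasU z (0 + 2) = 1 - ?a"
      using za by (simp add: numeral_2_eq_2 mult.commute)
    then show ?case
      using A0 by (intro exI[of _ 1] exI[of _ "1 - A"]) simp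
  next
    case (Suc n)
    then obtain P Q where PQ: "P $ 0 = 1" "fps_to_fls P = ?a ^ n * lucasU z (n + 1)"
      "Q $ 0 = 1" "fps_to_fls Q = ?a ^ (n + 1) * lucasU z (n + 2)"
      by blast
    have "fps_to_fls ((1 - A) * Q - A\<^sup>2 * P)
        = (1 - ?a) * (?a ^ (n + 1) * lucasU z (n + 2)) - ?a\<^sup>2 * (?a ^ n * lucasU z (n + 1))"
      using PQ by (simp add: fls_times_fps_to_fls fps_to_fls_power)
    also have "\<dots> = ?a ^ (n + 2) * (2 * z * lucasU z (n + 2) - lucasU z (n + 1))"
      unfolding za[symmetric] by (simp add: algebra_simps power2_eq_square)
    also have "\<dots> = ?a ^ (Suc n + 1) * lucasU z (Suc n + 2)"
      by (simp add: numeral_2_eq_2)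
    finally show ?case
      using PQ A0 by (intro exI[of _ Q] exI[of _ "(1 - A) * Q - A\<^sup>2 * P"]) (simp add: power2_eq_square)
  qed
  then obtain P where "P $ 0 = 1" "fps_to_fls P = ?a ^ n * lucasU z (n + 1)"
    by blast
  then show ?thesis
    by (metis fps_to_fls_eq_0_iff fps_zero_nth mult_zero_right zero_neq_one)
qed

lemma walk_system_eq_tridiag:
  fixes t :: "'a::field" and y :: "nat \<Rightarrow> 'a fls"
  assumes "i \<in> {1..k}"
  shows "y i - fls_X * (\<Sum>l=1..k. fls_const (adj_weight t i l) * y l)
    = (\<Sum>l=1..k. (tridiag (fls_X * (fls_const t - 1)) i l - fls_X) * y l)"
proof -
  have "fls_X * fls_const (adj_weight t i l)
      = fls_X + (if \<bar>int l - int i\<bar> \<le> 1 then fls_X * (fls_const t - 1) else 0)" for l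
    unfolding adj_weight_def by (simp add: algebra_simps)
  then have "fls_X * (\<Sum>l=1..k. fls_const (adj_weight t i l) * y l)
      = (\<Sum>l=1..k. (fls_X + (if \<bar>int l - int i\<bar> \<le> 1 then fls_X * (fls_const t - 1) else 0)) * y l)"
    by (simp add: sum_distrib_left mult.assoc[symmetric])
  moreover have "(\<Sum>l=1..k. (if i = l then 1 else 0) * y l) = (\<Sum>l=1..k. if i = l then y l else 0)"
    by (intro sum.cong) simp_all
  then have "(\<Sum>l=1..k. (if i = l then 1 else 0) * y l) = y i"
    using assms by simp
  ultimately show ?thesis
    unfolding tridiag_def by (simp add: algebra_simps sum.distrib sum_subtractf)
qed

lemma walk_system_unique:
  fixes t :: "'a::field" and y :: "nat \<Rightarrow> 'a fls"
  assumes "\<And>i. i \<in> {1..k} \<Longrightarrow> (\<Sum>l=1..k. (tridiag (fls_X * (fls_const t - 1)) i l - fls_X) * y l) = 0"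
    and "i \<in> {1..k}"
  shows "y i = 0"
proof (rule fls_X_linear_system_trivial[where c = "adj_weight t" and I = "{1..k}"])
  show "y i = fls_X * (\<Sum>l=1..k. fls_const (adj_weight t i l) * y l)" if "i \<in> {1..k}" for i
    using assms(1)[OF that] walk_system_eq_tridiag[OF that, of y t] by simp
qed (use assms(2) in simp_all)

lemma tridiag_inverse_fls:
  fixes t :: "'a::field" and z :: "'a fls"
  defines "a \<equiv> fls_X * (fls_const t - 1)"
  assumes t: "t \<noteq> 1" and za: "2 * z * a = 1 - a" and i: "i \<in> {1..k}" and j: "j \<in> {1..k}"
  shows "(\<Sum>l=1..k. tridiag a i l * (path_green z k l j / a)) = (if i = j then 1 else 0)"
proof -
  have a_const: "a = fps_to_fls (fps_X * fps_const (t - 1))"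
    unfolding a_def by (simp add: fls_times_fps_to_fls fls_const_diff)
  with t have "a \<noteq> 0"
    by simp
  moreover have "lucasU z (k + 1) \<noteq> 0"
    using za a_const by (intro lucasU_fls_nonzero[of "fps_X * fps_const (t - 1)"]) simp_all
  ultimately show ?thesis
    using za i j by (intro tridiag_inverse)
qed

lemma sherman_morrison_denominator_nonzero:
  fixes t :: "'a::field" and z :: "'a fls" and k :: nat
  defines "a \<equiv> fls_X * (fls_const t - 1)"
  defines "R \<equiv> \<lambda>i. \<Sum>j=1..k. path_green z k i j / a"
  assumes t: "t \<noteq> 1" and za: "2 * z * a = 1 - a"
  shows "1 - fls_X * (\<Sum>i=1..k. R i) \<noteq> 0"
proof
  assume D0: "1 - fls_X * (\<Sum>i=1..k. R i) = 0"
  have "(\<Sum>l=1..k. tridiag a i l * R l) = 1" if "i \<in> {1..k}" for i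
    using inverse_row_sum[OF _ tridiag_inverse_fls[where k = k, OF t za[unfolded a_def]] that, folded a_def]
    unfolding R_def by simp
  then have "(\<Sum>l=1..k. (tridiag a i l - fls_X) * R l) = 1 - fls_X * (\<Sum>i=1..k. R i)" if "i \<in> {1..k}" for i
    using that by (simp add: left_diff_distrib sum_subtractf sum_distrib_left)
  then have "R i = 0" if "i \<in> {1..k}" for i
    using D0 that unfolding a_def by (intro walk_system_unique[of k t R]) auto
  with D0 show False
    by simp
qed

lemma walk_gf_sherman_morrison:
  fixes t :: "'a::field" and z :: "'a fls" and k :: nat
  defines "a \<equiv> fls_X * (fls_const t - 1)"
  defines "B \<equiv> \<lambda>i j. path_green z k i j / a"
  defines "R \<equiv> \<lambda>i. \<Sum>j=1..k. B i j"
  defines "\<sigma> \<equiv> \<Sum>i=1..k. R i"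
  assumes t: "t \<noteq> 1" and za: "2 * z * a = 1 - a" and i: "i \<in> {1..k}" and j: "j \<in> {1..k}"
  shows "walk_gf t k i j = B i j + fls_X * R i * R j / (1 - fls_X * \<sigma>)"
proof -
  have inv: "(\<Sum>l=1..k. tridiag a i l * B l j) = (if i = j then 1 else 0)"
    if "i \<in> {1..k}" "j \<in> {1..k}" for i j
    unfolding B_def a_def using t za[unfolded a_def] that by (rule tridiag_inverse_fls)
  have D: "1 - fls_X * (\<Sum>l=1..k. \<Sum>m=1..k. B l m) \<noteq> 0"
    unfolding B_def a_def using t za[unfolded a_def] by (rule sherman_morrison_denominator_nonzero)
  let ?F = "\<lambda>l. B l j + fls_X * R l * R j / (1 - fls_X * \<sigma>)"
  have row: "(\<Sum>m=1..k. B l m) = R l" for l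
    unfolding R_def ..
  have col: "(\<Sum>m=1..k. B m j) = R j"
    unfolding B_def R_def by (simp add: path_green_sym)
  have diff: "(\<Sum>l=1..k. (tridiag a m l - fls_X) * (walk_gf t k l j - ?F l)) = 0" if "m \<in> {1..k}" for m
  proof -
    have "(\<Sum>l=1..k. (tridiag a m l - fls_X) * walk_gf t k l j) = (if m = j then 1 else 0)"
      using walk_system_eq_tridiag[OF that, of "\<lambda>l. walk_gf t k l j" t] walk_gf_eq[of t k m j]
      unfolding a_def by simp
    moreover have "(\<Sum>l=1..k. (tridiag a m l - fls_X) * ?F l) = (if m = j then 1 else 0)"
      using sherman_morrison_ones[of "{1..k}" "tridiag a" B, OF _ inv D that j]
      by (simp only: row col \<sigma>_def finite_atLeastAtMost)
    ultimately show ?thesis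
      by (simp only: right_diff_distrib sum_subtractf diff_self)
  qed
  have "walk_gf t k i j - ?F i = 0"
    using walk_system_unique[of k t "\<lambda>l. walk_gf t k l j - ?F l", folded a_def] diff i by blast
  then show "walk_gf t k i j = ?F i"
    by simp
qed

section \<open>Closed forms\<close>

lemma path_green_row_sum_closed:
  fixes z a :: "'a::field"
  assumes i: "i \<in> {1..k}" and u: "lucasU z (k + 1) \<noteq> 0" and c: "2 * (z - 1) * a \<noteq> 0"
  shows "(\<Sum>j=1..k. path_green z k i j / a)
    = (lucasU z (k + 1) - lucasU z (k + 1 - i) - lucasU z i) / (2 * (z - 1) * a * lucasU z (k + 1))"
proof -
  have "2 * (z - 1) * a * lucasU z (k + 1) * (\<Sum>j=1..k. path_green z k i j / a)
      = 2 * (z - 1) * lucasU z (k + 1) * (\<Sum>j=1..k. path_green z k i j)"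
    using c by (simp add: sum_divide_distrib[symmetric])
  also have "\<dots> = lucasU z (k + 1) - lucasU z (k + 1 - i) - lucasU z i"
    using i u by (rule path_green_row_sum)
  finally show ?thesis
    using u c by (simp add: field_simps)
qed

lemma tridiag_inverse_sums:
  fixes z a :: "'a::field" and k :: nat
  defines "u \<equiv> lucasU z (k + 1)" and "c \<equiv> 2 * (z - 1) * a"
  defines "R \<equiv> \<lambda>i. \<Sum>j=1..k. path_green z k i j / a"
  assumes u: "u \<noteq> 0" and c: "c \<noteq> 0"
  shows "(\<Sum>i=1..k. path_green z k i i / a) = lucasU_conv z k / (a * u)"
    and "(\<Sum>i=1..k. R i) = (of_nat k * u - 2 * (\<Sum>i=1..k. lucasU z i)) / (c * u)"
    and "(\<Sum>i=1..k. R i * R i) = (of_nat k * u\<^sup>2 - 4 * u * (\<Sum>i=1..k. lucasU z i)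
          + 2 * (\<Sum>i=1..k. lucasU z i ^ 2) + 2 * lucasU_conv z k) / (c * u)\<^sup>2"
proof -
  let ?V = "lucasU z"
  have R: "R i = (u - ?V (k + 1 - i) - ?V i) / (c * u)" if "i \<in> {1..k}" for i
    unfolding R_def u_def c_def using path_green_row_sum_closed[OF that] u c
    unfolding u_def c_def by simp
  have rev: "(\<Sum>i=1..k. f (k + 1 - i)) = (\<Sum>i=1..k. f i)" for f :: "nat \<Rightarrow> 'a"
    using sum.atLeastAtMost_rev[of f 1 k] by (simp add: add.commute)
  show "(\<Sum>i=1..k. path_green z k i i / a) = lucasU_conv z k / (a * u)"
    unfolding u_def sum_divide_distrib[symmetric] path_green_trace by simp
  have "(\<Sum>i=1..k. R i) = (\<Sum>i=1..k. u - ?V (k + 1 - i) - ?V i) / (c * u)"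
    unfolding sum_divide_distrib using R by (intro sum.cong) auto
  also have "(\<Sum>i=1..k. u - ?V (k + 1 - i) - ?V i) = of_nat k * u - 2 * (\<Sum>i=1..k. ?V i)"
    by (simp only: sum_subtractf rev[of ?V]) simp
  finally show "(\<Sum>i=1..k. R i) = (of_nat k * u - 2 * (\<Sum>i=1..k. ?V i)) / (c * u)" .
  have "(\<Sum>i=1..k. R i * R i) = (\<Sum>i=1..k. (u - ?V (k + 1 - i) - ?V i)\<^sup>2) / (c * u)\<^sup>2"
    unfolding sum_divide_distrib using R by (intro sum.cong) (auto simp: power2_eq_square)
  also have "(\<Sum>i=1..k. (u - ?V (k + 1 - i) - ?V i)\<^sup>2)
      = (\<Sum>i=1..k. u\<^sup>2 + ?V (k + 1 - i) ^ 2 + ?V i ^ 2 - 2 * u * ?V (k + 1 - i) - 2 * u * ?V i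
          + 2 * (?V i * ?V (k + 1 - i)))"
    by (intro sum.cong) (auto simp: power2_eq_square algebra_simps)
  also have "\<dots> = of_nat k * u\<^sup>2 - 4 * u * (\<Sum>i=1..k. ?V i) + 2 * (\<Sum>i=1..k. ?V i ^ 2) + 2 * lucasU_conv z k"
    unfolding lucasU_conv_def
    by (simp only: sum.distrib sum_subtractf sum_distrib_left[symmetric] rev[of "\<lambda>i. ?V i ^ 2"] rev[of ?V])
      simp
  finally show "(\<Sum>i=1..k. R i * R i) = (of_nat k * u\<^sup>2 - 4 * u * (\<Sum>i=1..k. ?V i)
      + 2 * (\<Sum>i=1..k. ?V i ^ 2) + 2 * lucasU_conv z k) / (c * u)\<^sup>2" .
qed

lemma tvar_ne_1: "tvar \<noteq> 1"
  unfolding tvar_def One_fract_def by (simp add: eq_fract one_pCons)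

lemma Gk_eq_sherman_morrison_trace:
  fixes z :: "real poly fract fls" and k :: nat
  defines "a \<equiv> fls_X * (fls_const tvar - 1)"
  defines "B \<equiv> \<lambda>i j. path_green z k i j / a"
  defines "R \<equiv> \<lambda>i. \<Sum>j=1..k. B i j"
  defines "\<sigma> \<equiv> \<Sum>i=1..k. R i"
  assumes za: "2 * z * a = 1 - a"
  shows "1 - fls_X * \<sigma> \<noteq> 0"
    and "fps_to_fls (Gk k)
      = 1 - of_nat k + (\<Sum>i=1..k. B i i) + fls_X / (1 - fls_X * \<sigma>) * (\<Sum>i=1..k. R i * R i)"
proof -
  show "1 - fls_X * \<sigma> \<noteq> 0"
    using sherman_morrison_denominator_nonzero[where k = k, OF tvar_ne_1 za[unfolded a_def]]
    unfolding \<sigma>_def R_def B_def a_def .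
  have "(\<Sum>i=1..k. walk_gf tvar k i i) = (\<Sum>i=1..k. B i i + fls_X / (1 - fls_X * \<sigma>) * (R i * R i))"
    using walk_gf_sherman_morrison[where k = k, OF tvar_ne_1 za[unfolded a_def]]
    unfolding \<sigma>_def R_def B_def a_def by (intro sum.cong) (simp_all add: field_simps)
  then show "fps_to_fls (Gk k)
      = 1 - of_nat k + (\<Sum>i=1..k. B i i) + fls_X / (1 - fls_X * \<sigma>) * (\<Sum>i=1..k. R i * R i)"
    unfolding Gk_eq_walk_gf_trace by (simp add: sum.distrib sum_distrib_left)
qed

lemma lucasU_sums_closed_in_a:
  fixes a :: "'a::field_char_0" and k :: nat
  defines "z \<equiv> (1 - a) / (2 * a)"
  defines "u \<equiv> lucasU z (k + 1)" and "w \<equiv> lucasU z k" and "K \<equiv> of_nat k"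
  assumes a: "a \<noteq> 0" and p: "1 - 3 * a \<noteq> 0" and q: "1 + a \<noteq> 0"
  shows "(\<Sum>i=1..k. lucasU z i) = a * (u - w - 1) / (1 - 3 * a)"
    and "(\<Sum>i=1..k. lucasU z i ^ 2) = - a * (2 * a * (K + 1 - u\<^sup>2) + (1 - a) * u * w) / ((1 - 3 * a) * (1 + a))"
    and "lucasU_conv z k = a * (K * (1 - a) * u - 2 * a * (K + 1) * w) / ((1 - 3 * a) * (1 + a))"
proof -
  have z1: "2 * (z - 1) = (1 - 3 * a) / a"
    and z2: "2 * (z\<^sup>2 - 1) = (1 - 3 * a) * (1 + a) / (2 * a\<^sup>2)"
    and za: "2 * z * a = 1 - a"
    using a unfolding z_def by (simp_all add: field_simps power2_eq_square)
  have "(1 - 3 * a) / a * (\<Sum>i=1..k. lucasU z i) = u - w - 1"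
    unfolding z1[symmetric] u_def w_def by (rule lucasU_sum)
  then show "(\<Sum>i=1..k. lucasU z i) = a * (u - w - 1) / (1 - 3 * a)"
    using a p by (simp add: field_simps)
  have c: "(1 - 3 * a) * (1 + a) / (2 * a\<^sup>2) \<noteq> 0"
    using a p q by simp
  have "(1 - 3 * a) * (1 + a) / (2 * a\<^sup>2) * (\<Sum>i=1..k. lucasU z i ^ 2) = - (K + 1 - u\<^sup>2 + z * u * w)"
    using lucasU_sum_squares[of z k] unfolding z2[symmetric] u_def w_def K_def
    by (simp add: algebra_simps)
  then have "(\<Sum>i=1..k. lucasU z i ^ 2) = - (K + 1 - u\<^sup>2 + z * u * w) / ((1 - 3 * a) * (1 + a) / (2 * a\<^sup>2))"
    by (metis c nonzero_mult_div_cancel_left)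
  also have "\<dots> = - (K + 1 - u\<^sup>2 + z * u * w) * (2 * a\<^sup>2) / ((1 - 3 * a) * (1 + a))"
    by (rule divide_divide_eq_right)
  also have "- (K + 1 - u\<^sup>2 + z * u * w) * (2 * a\<^sup>2) = - a * (2 * a * (K + 1 - u\<^sup>2) + (1 - a) * u * w)"
    unfolding za[symmetric] by (simp add: power2_eq_square algebra_simps)
  finally show "(\<Sum>i=1..k. lucasU z i ^ 2)
      = - a * (2 * a * (K + 1 - u\<^sup>2) + (1 - a) * u * w) / ((1 - 3 * a) * (1 + a))" .
  have "(1 - 3 * a) * (1 + a) / (2 * a\<^sup>2) * lucasU_conv z k = K * z * u - (K + 1) * w"
    using lucasU_conv_closed[of z k] unfolding z2[symmetric] u_def w_def K_def by simp
  then have "lucasU_conv z k = (K * z * u - (K + 1) * w) / ((1 - 3 * a) * (1 + a) / (2 * a\<^sup>2))"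
    by (metis c nonzero_mult_div_cancel_left)
  also have "\<dots> = (K * z * u - (K + 1) * w) * (2 * a\<^sup>2) / ((1 - 3 * a) * (1 + a))"
    by (rule divide_divide_eq_right)
  also have "(K * z * u - (K + 1) * w) * (2 * a\<^sup>2) = a * (K * (1 - a) * u - 2 * a * (K + 1) * w)"
    unfolding za[symmetric] by (simp add: power2_eq_square algebra_simps)
  finally show "lucasU_conv z k = a * (K * (1 - a) * u - 2 * a * (K + 1) * w) / ((1 - 3 * a) * (1 + a))" .
qed

lemma trace_rational_identity:
  fixes a X u w K S1 S2 S \<sigma> :: "'a::field_char_0"
  defines "p \<equiv> 1 - 3 * a" and "q \<equiv> 1 + a" and "r \<equiv> 1 + 3 * a"
  defines "\<gamma> \<equiv> K / p - 2 * a / p\<^sup>2 * ((u - w - 1) / u)"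
  assumes a: "a \<noteq> 0" and u: "u \<noteq> 0" and p: "p \<noteq> 0" and q: "q \<noteq> 0" and r: "r \<noteq> 0"
    and \<sigma>: "\<sigma> = (K * u - 2 * S1) / (p * u)" and D: "1 - X * \<sigma> \<noteq> 0"
    and S1: "S1 = a * (u - w - 1) / p"
    and S2: "S2 = - a * (2 * a * (K + 1 - u\<^sup>2) + (1 - a) * u * w) / (p * q)"
    and S: "S = a * (K * (1 - a) * u - 2 * a * (K + 1) * w) / (p * q)"
  shows "1 - K + S / (a * u) + X / (1 - X * \<sigma>) * ((K * u\<^sup>2 - 4 * u * S1 + 2 * S2 + 2 * S) / (p * u)\<^sup>2)
    = 1 + r / (p * q) * (1 / (1 - X * \<gamma>)
        - 2 * a * (K + 1) / (r * u) * ((1 - X * ((1 + K - u) / p)) / (1 - X * \<gamma>) + w - 1)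
        + K * a - 1)"
proof -
  have "\<sigma> = \<gamma>"
    unfolding \<sigma> S1 \<gamma>_def using p u by (simp add: field_simps power2_eq_square)
  define N where "N = p\<^sup>2 * u - X * (K * p * u - 2 * a * (u - w - 1))"
  have \<gamma>N: "1 - X * \<gamma> = N / (p\<^sup>2 * u)"
    unfolding \<gamma>_def N_def using p u by (simp add: field_simps power2_eq_square)
  then have N: "N \<noteq> 0"
    using D \<open>\<sigma> = \<gamma>\<close> by auto
  have "1 - K + S / (a * u) + X / (1 - X * \<sigma>) * ((K * u\<^sup>2 - 4 * u * S1 + 2 * S2 + 2 * S) / (p * u)\<^sup>2)
      = ((1 - K) * p * q * u * N + (K * (1 - a) * u - 2 * a * (K + 1) * w) * N
         + X * (K * u\<^sup>2 * p * q - 4 * u * a * (u - w - 1) * q - 2 * a * (2 * a * (K + 1 - u\<^sup>2) + (1 - a) * u * w)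
           + 2 * a * (K * (1 - a) * u - 2 * a * (K + 1) * w))) / (p * q * u * N)"
    unfolding \<open>\<sigma> = \<gamma>\<close> \<gamma>N S1 S2 S using a u p q N by (simp add: field_simps power2_eq_square)
  also have "\<dots> = (p * q * u * N + r * p\<^sup>2 * u * u - 2 * a * (K + 1) * (p * u * (p - X * (1 + K - u)) + (w - 1) * N)
      + (K * a - 1) * r * u * N) / (p * q * u * N)"
    unfolding N_def p_def q_def r_def by (simp add: algebra_simps power2_eq_square)
  also have "\<dots> = 1 + r / (p * q) * (1 / (1 - X * \<gamma>)
        - 2 * a * (K + 1) / (r * u) * ((1 - X * ((1 + K - u) / p)) / (1 - X * \<gamma>) + w - 1)
        + K * a - 1)"
    unfolding \<gamma>N using a u p q r N by (simp add: field_simps power2_eq_square)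
  finally show ?thesis .
qed

theorem theorem2:
  fixes k :: nat
  assumes "k \<ge> 2"
  defines "T \<equiv> fls_const tvar"
      and "X \<equiv> (fls_X :: real poly fract fls)"
  defines "a \<equiv> X * (T - 1)"
  defines "\<phi> \<equiv> (1 - a) / (2 * a)"
  defines "\<gamma> \<equiv> of_nat k / (1 - 3 * a)
              - (2 * a) / (1 - 3 * a) ^ 2
                * ((chebU k \<phi> - chebU (k - 1) \<phi> - 1) / chebU k \<phi>)"
  shows "fps_to_fls (Gk k) =
    1 + (1 + 3 * a) / ((1 - 3 * a) * (1 + a)) *
      ( 1 / (1 - X * \<gamma>)
        - (2 * a * (of_nat k + 1)) / ((1 + 3 * a) * chebU k \<phi>)
          * ( (1 - X * ((1 + of_nat k - chebU k \<phi>) / (1 - 3 * a))) / (1 - X * \<gamma>)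
              + chebU (k - 1) \<phi> - 1)
        + of_nat k * a - 1)"
proof -
  define u where "u = lucasU \<phi> (k + 1)"
  define w where "w = lucasU \<phi> k"
  have cheb: "chebU k \<phi> = u" "chebU (k - 1) \<phi> = w"
    unfolding u_def w_def chebU_eq_lucasU using assms(1) by simp_all
  have a_const: "a = fls_X * fls_const (tvar - 1)"
    unfolding a_def X_def T_def by (simp add: fls_const_diff)
  have nonzero: "a \<noteq> 0" "1 - 3 * a \<noteq> 0" "1 + a \<noteq> 0" "1 + 3 * a \<noteq> 0"
    using tvar_ne_1 fls_nonzeroI[of "1 - 3 * a" 0] fls_nonzeroI[of "1 + a" 0] fls_nonzeroI[of "1 + 3 * a" 0]
    unfolding a_const by (simp_all add: fls_X_times_conv_shift fls_shift_eq0_iff)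
  have za: "2 * \<phi> * a = 1 - a" and c: "2 * (\<phi> - 1) * a = 1 - 3 * a"
    unfolding \<phi>_def using nonzero by (simp_all add: field_simps)
  have u: "u \<noteq> 0"
    unfolding u_def using za a_const
    by (intro lucasU_fls_nonzero[of "fps_X * fps_const (tvar - 1)"]) (simp_all add: fls_times_fps_to_fls)
  note trace = Gk_eq_sherman_morrison_trace[of \<phi> k, folded X_def T_def, folded a_def, OF za]
  note sums = tridiag_inverse_sums[of \<phi> k a, folded u_def, unfolded c, OF u nonzero(2)]
  note lucas = lucasU_sums_closed_in_a[of a k, folded \<phi>_def u_def w_def, OF nonzero(1-3)]
  show ?thesis
    unfolding trace(2) sums(1,3) \<gamma>_def cheb
    by (rule trace_rational_identity) (use nonzero u trace(1) sums(2) lucas in simp_all)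
qed

end
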